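(* Let $\mathcal{P}$ be a data distribution on $\mathcal{X}\times[C]$, let $D_T$ be a fixed finite test set, and fix a training point $z_i$ that is either consistently helpful or consistently harmful (as defined in the context). Let $D_N$ be a random training set of size $n$ consisting of $z_i$ together with $n-1$ points drawn i.i.d. from $\mathcal{P}$ (written $D_N\sim\mathcal{P}^{n-1}|z_i$). For $k\in\{0,\dots,n-1\}$ let $\tau_k=\mathbb{E}_{D_N\sim\mathcal{P}^{n-1}|z_i}[\Delta^{D_N}_{z_i}(k,D_T)]$ and $\delta_k=\mathrm{Var}_{D_N\sim\mathcal{P}^{n-1}|z_i}(\Delta^{D_N}_{z_i}(k,D_T))$. Then the Shapley value instance attribution $g^{\mathrm{Shap}}$ is $\beta^{\mathrm{Shap}}$-robust and the leave-one-out instance attribution $g^{\mathrm{LOO}}$ is $\beta^{\mathrm{LOO}}$-robust for $z_i$, where $$\beta^{\mathrm{Shap}}\le \frac{n^{-1}\sum_{k=0}^{n-1}\delta_k}{\left(n^{-1}\sum_{k=0}^{n-1}\tau_k\right)^2}\qquad\text{and}\qquad \beta^{\mathrm{LOO}}\le\frac{\delta_{n-1}}{\tau_{n-1}^2}.$$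
   Context: Training set $D_N=\{z_j=(x_j,y_j)\}_{j\in N}$, $N=\{1,\dots,n\}$; test set $D_T$. For $S\subseteq N$, $f_S$ denotes the classifier obtained by training (by a fixed procedure) on $D_S=\{z_j:j\in S\}$, and the utility is the test accuracy $U(S,D_T)=\frac{1}{|D_T|}\sum_{(x_t,y_t)\in D_T}\mathbf{1}[f_S(x_t)=y_t]$. The marginal contribution of $z_i$ to subsets of size $k$ is $\Delta^{D_N}_{z_i}(k,D_T)=\binom{n-1}{k}^{-1}\sum_{S\subseteq N\setminus\{i\},\,|S|=k}\big(U(S\cup\{i\},D_T)-U(S,D_T)\big)$. LOO score: $g^{\mathrm{LOO}}(z_i,D_T,D_N)=\Delta^{D_N}_{z_i}(n-1,D_T)$. Shapley score: $g^{\mathrm{Shap}}(z_i,D_T,D_N)=n^{-1}\sum_{k=0}^{n-1}\Delta^{D_N}_{z_i}(k,D_T)$. $z_i$ is consistently helpful if $\tau_k\ge 0$ for all $k\in\{0,\dots,n-1\}$, and consistently harmful if $\tau_k<0$ for all such $k$. Define $\mathrm{sgn}(x)=-1$ if $x<0$ and $\mathrm{sgn}(x)=1$ if $x\ge 0$; set $\mathrm{sgn}^*(z_i)=1$ if $z_i$ is consistently helpful and $\mathrm{sgn}^*(z_i)=-1$ if consistently harmful. An attribution function $g$ is $\beta$-robust for $z_i$ if $\mathbb{P}_{D_N\sim\mathcal{P}^{n-1}|z_i}\big(\mathrm{sgn}(g(z_i,D_T,D_N))\neq\mathrm{sgn}^*(z_i)\big)=\beta$. *)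

theory Defs
  imports "HOL-Probability.Probability" "HOL-Library.Multiset"
begin

text \<open>A training set D_N is
  indexed by N = {1..n}, i.e. it is a function from indices to points.\<close>

definition test_acc :: "('x \<Rightarrow> 'y) \<Rightarrow> ('x \<times> 'y) list \<Rightarrow> real" where
  "test_acc f DT = (\<Sum>t\<leftarrow>DT. if f (fst t) = snd t then 1 else 0) / real (length DT)"

definition util ::
  "(('x \<times> 'y) multiset \<Rightarrow> ('x \<Rightarrow> 'y)) \<Rightarrow> (nat \<Rightarrow> 'x \<times> 'y) \<Rightarrow> nat set \<Rightarrow> ('x \<times> 'y) list \<Rightarrow> real" where
  "util train D S DT = test_acc (train (image_mset D (mset_set S))) DT"

definition marg_contrib ::
  "(('x \<times> 'y) multiset \<Rightarrow> ('x \<Rightarrow> 'y)) \<Rightarrow> nat \<Rightarrow> (nat \<Rightarrow> 'x \<times> 'y) \<Rightarrow> nat \<Rightarrow> nat \<Rightarrow> ('x \<times> 'y) list \<Rightarrow> real" where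
  "marg_contrib train n D i k DT =
     (\<Sum>S\<in>{S. S \<subseteq> {1..n} - {i} \<and> card S = k}. util train D (S \<union> {i}) DT - util train D S DT)
     / real ((n - 1) choose k)"

definition g_LOO ::
  "(('x \<times> 'y) multiset \<Rightarrow> ('x \<Rightarrow> 'y)) \<Rightarrow> nat \<Rightarrow> (nat \<Rightarrow> 'x \<times> 'y) \<Rightarrow> nat \<Rightarrow> ('x \<times> 'y) list \<Rightarrow> real" where
  "g_LOO train n D i DT = marg_contrib train n D i (n - 1) DT"

definition g_Shap ::
  "(('x \<times> 'y) multiset \<Rightarrow> ('x \<Rightarrow> 'y)) \<Rightarrow> nat \<Rightarrow> (nat \<Rightarrow> 'x \<times> 'y) \<Rightarrow> nat \<Rightarrow> ('x \<times> 'y) list \<Rightarrow> real" where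
  "g_Shap train n D i DT = (\<Sum>k<n. marg_contrib train n D i k DT) / real n"

definition sgn_pm :: "real \<Rightarrow> real" where
  "sgn_pm x = (if x < 0 then -1 else 1)"

text \<open>Random training set: z_i at index i, the other n-1 indices i.i.d. from P.\<close>
definition train_space :: "('x \<times> 'y) measure \<Rightarrow> nat \<Rightarrow> nat \<Rightarrow> (nat \<Rightarrow> 'x \<times> 'y) measure" where
  "train_space P n i = PiM ({1..n} - {i}) (\<lambda>_. P)"

definition tau ::
  "('x \<times> 'y) measure \<Rightarrow> (('x \<times> 'y) multiset \<Rightarrow> ('x \<Rightarrow> 'y)) \<Rightarrow> nat \<Rightarrow> nat \<Rightarrow> 'x \<times> 'y \<Rightarrow> ('x \<times> 'y) list \<Rightarrow> nat \<Rightarrow> real" where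
  "tau P train n i z DT k =
     prob_space.expectation (train_space P n i) (\<lambda>\<omega>. marg_contrib train n (fun_upd \<omega> i z) i k DT)"

definition delta ::
  "('x \<times> 'y) measure \<Rightarrow> (('x \<times> 'y) multiset \<Rightarrow> ('x \<Rightarrow> 'y)) \<Rightarrow> nat \<Rightarrow> nat \<Rightarrow> 'x \<times> 'y \<Rightarrow> ('x \<times> 'y) list \<Rightarrow> nat \<Rightarrow> real" where
  "delta P train n i z DT k =
     prob_space.variance (train_space P n i) (\<lambda>\<omega>. marg_contrib train n (fun_upd \<omega> i z) i k DT)"

definition consistently_helpful where
  "consistently_helpful P train n i z DT \<longleftrightarrow> (\<forall>k<n. tau P train n i z DT k \<ge> 0)"

definition consistently_harmful where
  "consistently_harmful P train n i z DT \<longleftrightarrow> (\<forall>k<n. tau P train n i z DT k < 0)"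

definition sgn_star where
  "sgn_star P train n i z DT = (if consistently_helpful P train n i z DT then 1 else (-1::real))"

definition robust_beta ::
  "('x \<times> 'y) measure \<Rightarrow> (('x \<times> 'y) multiset \<Rightarrow> ('x \<Rightarrow> 'y)) \<Rightarrow> nat \<Rightarrow> nat \<Rightarrow> 'x \<times> 'y \<Rightarrow> ('x \<times> 'y) list
   \<Rightarrow> ((nat \<Rightarrow> 'x \<times> 'y) \<Rightarrow> real) \<Rightarrow> real" where
  "robust_beta P train n i z DT g =
     measure (train_space P n i)
       {\<omega> \<in> space (train_space P n i). sgn_pm (g (fun_upd \<omega> i z)) \<noteq> sgn_star P train n i z DT}"

end

theory Submission
  imports Defs
begin

text \<open>Consistency makes \<open>sgn\<^sup>*(z\<^sub>i)\<close> the sign of the mean of the attribution (the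
  mean of the \<open>\<tau>\<^sub>k\<close> for Shapley, \<open>\<tau>\<^bsub>n-1\<^esub>\<close> for LOO).  An attribution whose sign differs
  from the sign of its mean \<open>\<mu>\<close> deviates from \<open>\<mu>\<close> by at least \<open>|\<mu>|\<close>, so Chebyshev's
  inequality bounds the error probability by variance over \<open>\<mu>\<^sup>2\<close>.  For Shapley, the
  variance of the average of the marginal contributions is at most the average of
  their variances by Cauchy-Schwarz, without any independence.\<close>

lemma sgn_pm_divide_pos: "c > 0 \<Longrightarrow> sgn_pm (x / c) = sgn_pm x"
  by (simp add: sgn_pm_def divide_less_0_iff)

lemma abs_le_abs_diff_if_sgn_pm_neq: "sgn_pm a \<noteq> sgn_pm b \<Longrightarrow> \<bar>b\<bar> \<le> \<bar>a - b\<bar>"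
  by (auto simp: sgn_pm_def split: if_splits)

lemma abs_mean_le:
  fixes a :: "'a \<Rightarrow> real"
  assumes "\<And>k. k \<in> K \<Longrightarrow> \<bar>a k\<bar> \<le> B" and "0 \<le> B"
  shows "\<bar>(\<Sum>k\<in>K. a k) / card K\<bar> \<le> B"
proof -
  have "\<bar>\<Sum>k\<in>K. a k\<bar> \<le> (\<Sum>k\<in>K. B)"
    using assms(1) by (intro order_trans[OF sum_abs] sum_mono)
  then have "\<bar>\<Sum>k\<in>K. a k\<bar> \<le> card K * B" by simp
  then show ?thesis
    using assms(2) by (cases "card K = 0") (auto simp: abs_divide divide_le_eq mult.commute)
qed

lemma square_mean_le_mean_square:
  fixes a :: "'a \<Rightarrow> real"
  assumes "finite K" "K \<noteq> {}"
  shows "((\<Sum>k\<in>K. a k) / card K)\<^sup>2 \<le> (\<Sum>k\<in>K. (a k)\<^sup>2) / card K"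
proof -
  have "card K > 0" using assms by (simp add: card_gt_0_iff)
  then show ?thesis
    using sum_squared_le_sum_of_squares[of a K]
    by (simp add: power_divide divide_le_eq power2_eq_square field_simps)
qed

lemma (in finite_measure) integrable_square_if_bounded:
  fixes f :: "'a \<Rightarrow> real"
  assumes "f \<in> borel_measurable M" and "\<And>x. x \<in> space M \<Longrightarrow> \<bar>f x\<bar> \<le> B"
  shows "integrable M (\<lambda>x. (f x)\<^sup>2)"
proof (rule integrable_const_bound[where B = "B\<^sup>2"])
  have "\<bar>f x\<bar>\<^sup>2 \<le> B\<^sup>2" if "x \<in> space M" for x
    using assms(2)[OF that] by (intro power_mono) auto
  then show "AE x in M. norm ((f x)\<^sup>2) \<le> B\<^sup>2"
    by (intro AE_I2) simp
qed (use assms(1) in simp)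

lemma (in prob_space) integrable_square_diff_const:
  fixes f :: "'a \<Rightarrow> real"
  assumes "f \<in> borel_measurable M" "integrable M (\<lambda>x. (f x)\<^sup>2)"
  shows "integrable M (\<lambda>x. (f x - c)\<^sup>2)"
proof -
  have "integrable M f" using assms by (rule square_integrable_imp_integrable)
  then show ?thesis
    using assms(2) unfolding power2_diff by auto
qed

lemma (in prob_space) prob_sgn_pm_neq_le_variance:
  fixes f :: "'a \<Rightarrow> real"
  assumes "f \<in> borel_measurable M" "integrable M (\<lambda>x. (f x)\<^sup>2)" "expectation f \<noteq> 0"
  shows "prob {x \<in> space M. sgn_pm (f x) \<noteq> sgn_pm (expectation f)}
           \<le> variance f / (expectation f)\<^sup>2"
proof -
  let ?\<mu> = "expectation f"
  have "prob {x \<in> space M. sgn_pm (f x) \<noteq> sgn_pm ?\<mu>}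
      \<le> prob {x \<in> space M. \<bar>f x - ?\<mu>\<bar> \<ge> \<bar>?\<mu>\<bar>}"
    using assms(1) abs_le_abs_diff_if_sgn_pm_neq by (intro finite_measure_mono) auto
  also have "\<dots> \<le> variance f / \<bar>?\<mu>\<bar>\<^sup>2"
    using assms by (intro Chebyshev_inequality) auto
  finally show ?thesis by simp
qed

lemma (in prob_space) variance_mean_le_mean_variance:
  fixes X :: "'i \<Rightarrow> 'a \<Rightarrow> real"
  assumes K: "finite K" "K \<noteq> {}"
    and X_meas: "\<And>k. k \<in> K \<Longrightarrow> X k \<in> borel_measurable M"
    and X_sq: "\<And>k. k \<in> K \<Longrightarrow> integrable M (\<lambda>x. (X k x)\<^sup>2)"
  shows "variance (\<lambda>x. (\<Sum>k\<in>K. X k x) / card K) \<le> (\<Sum>k\<in>K. variance (X k)) / card K"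
proof -
  have X_int: "integrable M (X k)" if "k \<in> K" for k
    by (rule square_integrable_imp_integrable[OF X_meas[OF that] X_sq[OF that]])
  have centred: "integrable M (\<lambda>x. (X k x - c)\<^sup>2)" if "k \<in> K" for k c
    by (rule integrable_square_diff_const[OF X_meas[OF that] X_sq[OF that]])
  have mean: "expectation (\<lambda>x. (\<Sum>k\<in>K. X k x) / card K)
      = (\<Sum>k\<in>K. expectation (X k)) / card K"
    using X_int by (simp add: Bochner_Integration.integral_sum)
  have "variance (\<lambda>x. (\<Sum>k\<in>K. X k x) / card K)
      = expectation (\<lambda>x. ((\<Sum>k\<in>K. X k x - expectation (X k)) / card K)\<^sup>2)"
    unfolding mean by (simp add: sum_subtractf diff_divide_distrib)
  also have "\<dots> \<le> expectation (\<lambda>x. (\<Sum>k\<in>K. (X k x - expectation (X k))\<^sup>2) / card K)"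
  proof (rule integral_mono')
    show "integrable M (\<lambda>x. (\<Sum>k\<in>K. (X k x - expectation (X k))\<^sup>2) / card K)"
      using centred by (intro integrable_divide integrable_sum) auto
  qed (simp_all add: square_mean_le_mean_square[OF K] sum_nonneg)
  also have "\<dots> = (\<Sum>k\<in>K. variance (X k)) / card K"
    using centred by (simp add: Bochner_Integration.integral_sum)
  finally show ?thesis .
qed

lemma test_acc_bounds: "0 \<le> test_acc f DT" "test_acc f DT \<le> 1"
proof -
  have nonneg: "0 \<le> (\<Sum>t\<leftarrow>DT. if f (fst t) = snd t then 1 else (0::real))"
    by (induction DT) auto
  have le_length: "(\<Sum>t\<leftarrow>DT. if f (fst t) = snd t then 1 else (0::real)) \<le> length DT"
    by (induction DT) auto
  show "0 \<le> test_acc f DT"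
    unfolding test_acc_def using nonneg by simp
  show "test_acc f DT \<le> 1"
    unfolding test_acc_def using nonneg le_length by (cases "DT = []") (auto simp: divide_le_eq)
qed

lemma abs_util_diff_le_1: "\<bar>util train D S DT - util train D S' DT\<bar> \<le> 1"
  using test_acc_bounds unfolding util_def by (smt (verit))

lemma card_marg_contrib_subsets:
  assumes "i \<in> {1..n}"
  shows "card {S. S \<subseteq> {1..n} - {i} \<and> card S = k} = (n - 1) choose k"
proof -
  have "card ({1..n} - {i}) = n - 1" using assms by simp
  then show ?thesis by (simp add: n_subsets)
qed

lemma abs_marg_contrib_le_1:
  assumes "i \<in> {1..n}"
  shows "\<bar>marg_contrib train n D i k DT\<bar> \<le> 1"
  unfolding marg_contrib_def card_marg_contrib_subsets[OF assms, symmetric]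
  by (intro abs_mean_le abs_util_diff_le_1) simp

lemma abs_g_Shap_le_1:
  assumes "i \<in> {1..n}"
  shows "\<bar>g_Shap train n D i DT\<bar> \<le> 1"
  using abs_mean_le[of "{..<n}" "\<lambda>k. marg_contrib train n D i k DT" 1]
  by (simp add: g_Shap_def abs_marg_contrib_le_1[OF assms])

lemma prob_space_train_space: "prob_space P \<Longrightarrow> prob_space (train_space P n i)"
  unfolding train_space_def by (rule prob_space_PiM) simp

lemma marg_contrib_measurable:
  assumes "i \<in> {1..n}"
    and meas: "\<And>S. S \<subseteq> {1..n} \<Longrightarrow>
      (\<lambda>\<omega>. util train (fun_upd \<omega> i z) S DT) \<in> borel_measurable (train_space P n i)"
  shows "(\<lambda>\<omega>. marg_contrib train n (fun_upd \<omega> i z) i k DT) \<in> borel_measurable (train_space P n i)"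
  unfolding marg_contrib_def
  by (intro borel_measurable_divide borel_measurable_sum borel_measurable_diff meas
      borel_measurable_const) (use assms(1) in auto)

lemma sgn_star_eq_sgn_pm_sum_tau:
  assumes "consistently_helpful P train n i z DT \<or> consistently_harmful P train n i z DT"
    and K: "finite K" "K \<noteq> {}" "K \<subseteq> {..<n}"
  shows "sgn_star P train n i z DT = sgn_pm (\<Sum>k\<in>K. tau P train n i z DT k)"
proof (cases "consistently_helpful P train n i z DT")
  case True
  then have "0 \<le> (\<Sum>k\<in>K. tau P train n i z DT k)"
    using K by (intro sum_nonneg) (auto simp: consistently_helpful_def)
  with True show ?thesis by (simp add: sgn_star_def sgn_pm_def)
next
  case False
  then have "(\<Sum>k\<in>K. tau P train n i z DT k) < (\<Sum>k\<in>K. 0)"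
    using assms by (intro sum_strict_mono) (auto simp: consistently_harmful_def)
  with False show ?thesis by (simp add: sgn_star_def sgn_pm_def)
qed

lemma robust_beta_le_variance:
  fixes P :: "('x \<times> 'y) measure" and n i :: nat and z :: "'x \<times> 'y"
    and g :: "(nat \<Rightarrow> 'x \<times> 'y) \<Rightarrow> real"
  defines "M \<equiv> train_space P n i" and "f \<equiv> \<lambda>\<omega>. g (fun_upd \<omega> i z)"
  assumes "prob_space P" and "f \<in> borel_measurable M" and "\<And>D. \<bar>g D\<bar> \<le> B"
    and "prob_space.expectation M f \<noteq> 0"
    and "sgn_star P train n i z DT = sgn_pm (prob_space.expectation M f)"
  shows "robust_beta P train n i z DT g
           \<le> prob_space.variance M f / (prob_space.expectation M f)\<^sup>2"
proof -
  interpret prob_space M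
    unfolding M_def using assms(3) by (rule prob_space_train_space)
  have "integrable M (\<lambda>\<omega>. (f \<omega>)\<^sup>2)"
    using assms(4,5) unfolding f_def by (intro integrable_square_if_bounded)
  then show ?thesis
    using prob_sgn_pm_neq_le_variance[OF assms(4)] assms(6,7)
    by (simp add: robust_beta_def M_def f_def)
qed

lemma robust_beta_Shap_le:
  assumes "prob_space P" and "n \<ge> 1" and "i \<in> {1..n}"
    and meas: "\<And>S. S \<subseteq> {1..n} \<Longrightarrow>
      (\<lambda>\<omega>. util train (fun_upd \<omega> i z) S DT) \<in> borel_measurable (train_space P n i)"
    and consistent: "consistently_helpful P train n i z DT \<or> consistently_harmful P train n i z DT"
    and mean_nz: "(\<Sum>k<n. tau P train n i z DT k) / real n \<noteq> 0"
  shows "robust_beta P train n i z DT (\<lambda>D. g_Shap train n D i DT)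
           \<le> ((\<Sum>k<n. delta P train n i z DT k) / real n)
              / ((\<Sum>k<n. tau P train n i z DT k) / real n)\<^sup>2"
proof -
  interpret prob_space "train_space P n i"
    using assms(1) by (rule prob_space_train_space)
  define X where "X k = (\<lambda>\<omega>. marg_contrib train n (fun_upd \<omega> i z) i k DT)" for k
  have tau_eq: "tau P train n i z DT k = expectation (X k)" for k
    unfolding tau_def X_def ..
  have delta_eq: "delta P train n i z DT k = variance (X k)" for k
    unfolding delta_def X_def ..
  have X_meas: "X k \<in> borel_measurable (train_space P n i)" for k
    unfolding X_def using assms(3) meas by (rule marg_contrib_measurable)
  have X_sq: "integrable (train_space P n i) (\<lambda>\<omega>. (X k \<omega>)\<^sup>2)" for k
    using X_meas by (rule integrable_square_if_bounded[where B = 1])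
      (simp add: X_def abs_marg_contrib_le_1[OF assms(3)])
  let ?Shap = "\<lambda>\<omega>. (\<Sum>k<n. X k \<omega>) / card {..<n}"
  have Shap_eq: "g_Shap train n (fun_upd \<omega> i z) i DT = ?Shap \<omega>" for \<omega>
    by (simp add: g_Shap_def X_def)
  have mean: "expectation ?Shap = (\<Sum>k<n. tau P train n i z DT k) / real n"
    using square_integrable_imp_integrable[OF X_meas X_sq]
    by (simp add: Bochner_Integration.integral_sum tau_eq)
  have sgn: "sgn_star P train n i z DT = sgn_pm ((\<Sum>k<n. tau P train n i z DT k) / real n)"
    using sgn_star_eq_sgn_pm_sum_tau[OF consistent, of "{..<n}"] assms(2)
    by (simp add: sgn_pm_divide_pos lessThan_empty_iff)
  have "robust_beta P train n i z DT (\<lambda>D. g_Shap train n D i DT)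
      \<le> variance (\<lambda>\<omega>. g_Shap train n (fun_upd \<omega> i z) i DT)
        / (expectation (\<lambda>\<omega>. g_Shap train n (fun_upd \<omega> i z) i DT))\<^sup>2"
  proof (rule robust_beta_le_variance[where B = 1])
    show "(\<lambda>\<omega>. g_Shap train n (fun_upd \<omega> i z) i DT) \<in> borel_measurable (train_space P n i)"
      unfolding Shap_eq using X_meas by measurable
    show "\<bar>g_Shap train n D i DT\<bar> \<le> 1" for D
      using assms(3) by (rule abs_g_Shap_le_1)
  qed (use assms(1) mean mean_nz sgn in \<open>simp_all add: Shap_eq\<close>)
  also have "\<dots> = variance ?Shap / (expectation ?Shap)\<^sup>2"
    by (simp only: Shap_eq)
  also have "\<dots> \<le> ((\<Sum>k<n. delta P train n i z DT k) / real n) / (expectation ?Shap)\<^sup>2"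
    using variance_mean_le_mean_variance[of "{..<n}" X, OF _ _ X_meas X_sq] assms(2)
    by (intro divide_right_mono) (simp_all add: delta_eq lessThan_empty_iff)
  also have "\<dots> = ((\<Sum>k<n. delta P train n i z DT k) / real n)
      / ((\<Sum>k<n. tau P train n i z DT k) / real n)\<^sup>2"
    unfolding mean ..
  finally show ?thesis .
qed

lemma robust_beta_LOO_le:
  assumes "prob_space P" and "n \<ge> 1" and "i \<in> {1..n}"
    and meas: "\<And>S. S \<subseteq> {1..n} \<Longrightarrow>
      (\<lambda>\<omega>. util train (fun_upd \<omega> i z) S DT) \<in> borel_measurable (train_space P n i)"
    and consistent: "consistently_helpful P train n i z DT \<or> consistently_harmful P train n i z DT"
    and mean_nz: "tau P train n i z DT (n - 1) \<noteq> 0"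
  shows "robust_beta P train n i z DT (\<lambda>D. g_LOO train n D i DT)
           \<le> delta P train n i z DT (n - 1) / (tau P train n i z DT (n - 1))\<^sup>2"
proof -
  have sgn: "sgn_star P train n i z DT = sgn_pm (tau P train n i z DT (n - 1))"
    using sgn_star_eq_sgn_pm_sum_tau[OF consistent, of "{n - 1}"] assms(2) by simp
  show ?thesis
    unfolding g_LOO_def delta_def tau_def
  proof (rule robust_beta_le_variance[where g = "\<lambda>D. marg_contrib train n D i (n - 1) DT" and B = 1])
    show "(\<lambda>\<omega>. marg_contrib train n (fun_upd \<omega> i z) i (n - 1) DT) \<in> borel_measurable (train_space P n i)"
      using assms(3) meas by (rule marg_contrib_measurable)
    show "\<bar>marg_contrib train n D i (n - 1) DT\<bar> \<le> 1" for D
      using assms(3) by (rule abs_marg_contrib_le_1)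
  qed (use assms(1) sgn mean_nz in \<open>simp_all add: tau_def\<close>)
qed

theorem theorem3p4:
  fixes P :: "('x \<times> 'y) measure"
    and train :: "('x \<times> 'y) multiset \<Rightarrow> ('x \<Rightarrow> 'y)"
    and n i :: nat and z :: "'x \<times> 'y" and DT :: "('x \<times> 'y) list"
  assumes "prob_space P"
    and "n \<ge> 1" and "i \<in> {1..n}"
    and "DT \<noteq> []"
    and meas: "\<And>S. S \<subseteq> {1..n} \<Longrightarrow>
      (\<lambda>\<omega>. util train (fun_upd \<omega> i z) S DT) \<in> borel_measurable (train_space P n i)"
    and "consistently_helpful P train n i z DT \<or> consistently_harmful P train n i z DT"
  shows "((\<Sum>k<n. tau P train n i z DT k) / real n \<noteq> 0 \<longrightarrow>
           robust_beta P train n i z DT (\<lambda>D. g_Shap train n D i DT)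
             \<le> ((\<Sum>k<n. delta P train n i z DT k) / real n)
                / ((\<Sum>k<n. tau P train n i z DT k) / real n)\<^sup>2)
       \<and> (tau P train n i z DT (n - 1) \<noteq> 0 \<longrightarrow>
           robust_beta P train n i z DT (\<lambda>D. g_LOO train n D i DT)
             \<le> delta P train n i z DT (n - 1) / (tau P train n i z DT (n - 1))\<^sup>2)"
  using robust_beta_Shap_le[OF assms(1-3) meas assms(6)]
    robust_beta_LOO_le[OF assms(1-3) meas assms(6)]
  by blast

end
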